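(* There is $C_{\boldsymbol\tau,\boldsymbol\eta}>0$ such that for any zero-average $f,g\in W_0^\infty(\mathbb T^{2n})$ with $L_{\boldsymbol\tau}g=L_{\boldsymbol\eta}f$, there is $P\in W^\infty(\mathbb T^{2n})$ with $L_{\boldsymbol\tau}P=f$, $L_{\boldsymbol\eta}P=g$, and for all $s\ge0$, $\|P\|_s\le C_{\boldsymbol\tau,\boldsymbol\eta}(\|f\|_{s+2\gamma}+\|g\|_{s+2\gamma})$.
   Context: $\boldsymbol\tau=(\tau_1,\dots,\tau_n,0,\dots,0)$, $\boldsymbol\eta=(0,\dots,0,\eta_1,\dots,\eta_n)\in\mathbb R^{2n}$, $n\ge2$, with $\sum\tau_j\eta_j=0$, Diophantine: there are $c,\gamma>0$ with $|\boldsymbol\tau\cdot\mathbf m-p|>c|\mathbf m_1\cdot\mathbf m_1|^{-\gamma}$ if $\mathbf m_1\ne0$ and $|\boldsymbol\eta\cdot\mathbf m-p|>c|\mathbf m_2\cdot\mathbf m_2|^{-\gamma}$ if $\mathbf m_2\ne0$, for $\mathbf m=(\mathbf m_1,\mathbf m_2)\in\mathbb Z^n\times\mathbb Z^n$, $p\in\mathbb Z$. On $L^2(\mathbb T^{2n})$ write $f=\sum_{\mathbf m}f_{\mathbf m}e^{2\pi i\mathbf m\cdot(\mathbf x,\boldsymbol\xi)}$, $\|f\|_s^2=\sum_{\mathbf m}(1+4\pi^2\mathbf m\cdot\mathbf m)^s|f_{\mathbf m}|^2$, $W^\infty(\mathbb T^{2n})=\bigcap_sW^s$, $W^\infty_0$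 its zero-average subspace. For $\boldsymbol\kappa\in\{\boldsymbol\tau,\boldsymbol\eta\}$, $L_{\boldsymbol\kappa}h(\mathbf x,\boldsymbol\xi)=h((\mathbf x,\boldsymbol\xi)+\boldsymbol\kappa)-h(\mathbf x,\boldsymbol\xi)$, i.e. $L_{\boldsymbol\kappa}$ multiplies the $\mathbf m$-th Fourier coefficient by $e^{2\pi i\mathbf m\cdot\boldsymbol\kappa}-1$. *)

theory Defs
  imports "HOL-Analysis.Analysis"
begin

text \<open>Functions on the torus T^{2n} = T^n x T^n are represented by their Fourier
  coefficient families, indexed by m = (m1, m2) in Z^n x Z^n.
  Points of R^{2n} are pairs (a, b) in R^n x R^n.\<close>

type_synonym ('n) fcoeff = "((int^'n) \<times> (int^'n)) \<Rightarrow> complex"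

definition idot :: "int^'n \<Rightarrow> int^'n \<Rightarrow> real" where
  "idot a b = (\<Sum>j\<in>UNIV. real_of_int (a $ j) * real_of_int (b $ j))"

definition mdot :: "int^'n \<Rightarrow> real^'n \<Rightarrow> real" where
  "mdot m v = (\<Sum>j\<in>UNIV. real_of_int (m $ j) * v $ j)"

definition msq :: "(int^'n) \<times> (int^'n) \<Rightarrow> real" where
  "msq m = idot (fst m) (fst m) + idot (snd m) (snd m)"

definition pdot :: "(int^'n) \<times> (int^'n) \<Rightarrow> (real^'n) \<times> (real^'n) \<Rightarrow> real" where
  "pdot m k = mdot (fst m) (fst k) + mdot (snd m) (snd k)"

definition sob_weight :: "real \<Rightarrow> (int^'n) \<times> (int^'n) \<Rightarrow> real" where
  "sob_weight s m = (1 + 4 * pi\<^sup>2 * msq m) powr s"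

definition in_W :: "real \<Rightarrow> ('n::finite) fcoeff \<Rightarrow> bool" where
  "in_W s f \<longleftrightarrow> (\<lambda>m. sob_weight s m * (cmod (f m))\<^sup>2) summable_on UNIV"

definition sob_norm :: "real \<Rightarrow> ('n::finite) fcoeff \<Rightarrow> real" where
  "sob_norm s f = sqrt (\<Sum>\<^sub>\<infinity>m. sob_weight s m * (cmod (f m))\<^sup>2)"

definition W_inf :: "('n::finite) fcoeff \<Rightarrow> bool" where
  "W_inf f \<longleftrightarrow> (\<forall>s. in_W s f)"

definition W0_inf :: "('n::finite) fcoeff \<Rightarrow> bool" where
  "W0_inf f \<longleftrightarrow> W_inf f \<and> f (0, 0) = 0"

text \<open>L_kappa h (x) = h(x + kappa) - h(x), acting on Fourier coefficients\<close>
definition Lop :: "(real^'n::finite) \<times> (real^'n) \<Rightarrow> 'n fcoeff \<Rightarrow> 'n fcoeff" where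
  "Lop k h = (\<lambda>m. (exp (2 * pi * \<i> * complex_of_real (pdot m k)) - 1) * h m)"

end

theory Submission
  imports Defs
begin

text \<open>L_tau and L_eta are Fourier multipliers with symbols a(m) = e(m . tau) - 1 and
  b(m) = e(m . eta) - 1, where a depends only on m1 and b only on m2. Put
  P(m) = f(m) / a(m) where a(m) \<noteq> 0 and P(m) = g(m) / b(m) otherwise; the compatibility
  a g = b f makes P solve both equations. Since |e(theta) - 1| \<ge> 2 dist(theta, Z), the
  Diophantine conditions give |a(m)| > c |m1|^(-2 gamma) \<ge> c |m|^(-2 gamma) whenever m1 \<noteq> 0
  (and likewise for b), so the division loses 2 gamma derivatives with constant 1/c.\<close>

lemma sin_ge_third:
  fixes x :: real assumes "0 \<le> x" "x \<le> 2"
  shows "x / 3 \<le> sin x"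
proof -
  have "\<bar>sin x - x\<bar> \<le> x ^ 3 / 6"
    using Maclaurin_sin_bound[of x 3] assms by (simp add: sin_coeff_def numeral_3_eq_3 fact_numeral)
  moreover have "x ^ 3 \<le> 4 * x"
    using assms mult_mono[of x 2 x 2] mult_left_mono[of "x * x" 4 x] by (simp add: power3_eq_cube)
  ultimately show ?thesis
    unfolding abs_le_iff by linarith
qed

lemma norm_exp_2pi_minus_1_ge:
  fixes d :: real assumes "\<bar>d\<bar> \<le> 1/2"
  shows "2 * \<bar>d\<bar> \<le> cmod (exp (2 * pi * \<i> * complex_of_real d) - 1)"
proof -
  have "\<bar>pi * d\<bar> \<le> 2"
    using assms pi_less_4 mult_mono[of pi 4 "\<bar>d\<bar>" "1/2"] by (simp add: abs_mult)
  then have "pi * \<bar>d\<bar> / 3 \<le> sin (pi * \<bar>d\<bar>)"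
    using sin_ge_third[of "pi * \<bar>d\<bar>"] by (simp add: abs_mult)
  moreover have "\<bar>d\<bar> \<le> pi * \<bar>d\<bar> / 3"
    using pi_gt3 mult_right_mono[of 3 pi "\<bar>d\<bar>"] by simp
  moreover have "\<bar>sin (pi * d)\<bar> = \<bar>sin (pi * \<bar>d\<bar>)\<bar>"
    by (cases "0 \<le> d") auto
  moreover have "0 \<le> sin (pi * \<bar>d\<bar>)"
    using assms by (intro sin_ge_zero) auto
  moreover have "cmod (exp (2 * pi * \<i> * complex_of_real d) - 1) = 2 * \<bar>sin (pi * d)\<bar>"
    using dist_exp_i_1[of "2 * pi * d"] by (simp add: mult.commute mult.left_commute)
  ultimately show ?thesis by linarith
qed

lemma norm_exp_2pi_minus_1_gt:
  fixes \<theta> \<epsilon> :: real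
  assumes "\<And>p::int. \<epsilon> < \<bar>\<theta> - real_of_int p\<bar>"
  shows "\<epsilon> < cmod (exp (2 * pi * \<i> * complex_of_real \<theta>) - 1)"
proof -
  define d where "d = \<theta> - real_of_int (round \<theta>)"
  have "exp (2 * pi * \<i> * complex_of_real \<theta>) = exp (2 * pi * \<i> * complex_of_real d) * exp (2 * of_int (round \<theta>) * pi * \<i>)"
    by (simp add: d_def algebra_simps flip: exp_add)
  also have "exp (2 * of_int (round \<theta>) * pi * \<i>) = 1"
    by (rule exp_integer_2pi) simp
  finally have "exp (2 * pi * \<i> * complex_of_real \<theta>) = exp (2 * pi * \<i> * complex_of_real d)"
    by simp
  moreover have "\<bar>d\<bar> \<le> 1/2"
    using of_int_round_abs_le[of \<theta>] by (simp add: d_def abs_minus_commute)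
  moreover have "\<epsilon> < \<bar>d\<bar>"
    using assms unfolding d_def .
  ultimately show ?thesis
    using norm_exp_2pi_minus_1_ge[of d] by simp
qed

lemma sob_weight_nonneg: "0 \<le> sob_weight s m"
  by (simp add: sob_weight_def)

lemma idot_self_nonneg: "0 \<le> idot a a"
  unfolding idot_def by (intro sum_nonneg) auto

lemma idot_self_pos: "a \<noteq> 0 \<Longrightarrow> 0 < idot a a"
proof -
  assume "a \<noteq> 0"
  then obtain j where "a $ j \<noteq> 0"
    by (metis vec_eq_iff zero_index)
  then have "0 < real_of_int (a $ j) * real_of_int (a $ j)"
    by (auto simp: zero_less_mult_iff linorder_neq_iff)
  also have "\<dots> \<le> idot a a"
    unfolding idot_def by (rule member_le_sum) auto
  finally show ?thesis .
qed

lemma idot_fst_le_msq: "idot (fst m) (fst m) \<le> msq m"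
  using idot_self_nonneg[of "snd m"] by (simp add: msq_def)

lemma idot_snd_le_msq: "idot (snd m) (snd m) \<le> msq m"
  using idot_self_nonneg[of "fst m"] by (simp add: msq_def)

lemma sob_weight_mult_powr_msq_le:
  assumes "0 \<le> \<gamma>"
  shows "sob_weight s m * msq m powr \<gamma> \<le> sob_weight (s + \<gamma>) m"
proof -
  have "1 \<le> 4 * pi\<^sup>2"
    using pi_gt3 mult_mono[of 1 pi 1 pi] by (simp add: power2_eq_square)
  moreover have "0 \<le> msq m"
    using idot_self_nonneg[of "fst m"] idot_self_nonneg[of "snd m"] by (simp add: msq_def)
  ultimately have "msq m powr \<gamma> \<le> (1 + 4 * pi\<^sup>2 * msq m) powr \<gamma>"
    using assms mult_right_mono[of 1 "4 * pi\<^sup>2" "msq m"] by (intro powr_mono2) auto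
  then show ?thesis
    using sob_weight_nonneg[of s m] by (simp add: sob_weight_def powr_add mult_left_mono)
qed

lemma sob_weight_divide_le:
  fixes a h :: complex
  assumes "0 < c" "0 \<le> \<gamma>" "0 < msq m" and small: "c * msq m powr (- \<gamma>) < cmod a"
  shows "sob_weight s m * (cmod (h / a))\<^sup>2 \<le> (1 / c)\<^sup>2 * (sob_weight (s + 2 * \<gamma>) m * (cmod h)\<^sup>2)"
proof -
  define x where "x = msq m powr \<gamma>"
  have "0 < x"
    using assms(3) by (simp add: x_def)
  have "c < cmod a * x"
    using small \<open>0 < x\<close> by (simp add: x_def powr_minus field_simps)
  then have "cmod (h / a) = cmod h * x / (cmod a * x)"
    using \<open>0 < x\<close> by (simp add: norm_divide)
  also have "\<dots> \<le> cmod h * x / c"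
    using \<open>c < cmod a * x\<close> \<open>0 < x\<close> assms(1) by (intro divide_left_mono) auto
  finally have "cmod (h / a) \<le> cmod h * x / c" .
  then have "(cmod (h / a))\<^sup>2 \<le> (cmod h * x / c)\<^sup>2"
    by (rule power_mono) simp
  also have "\<dots> = (1 / c)\<^sup>2 * (cmod h)\<^sup>2 * msq m powr (2 * \<gamma>)"
    by (simp add: x_def power_mult_distrib power_divide power2_eq_square powr_add[symmetric])
  finally have "sob_weight s m * (cmod (h / a))\<^sup>2
      \<le> (1 / c)\<^sup>2 * (cmod h)\<^sup>2 * (sob_weight s m * msq m powr (2 * \<gamma>))"
    using sob_weight_nonneg[of s m] by (simp add: mult_left_mono mult_ac)
  also have "\<dots> \<le> (1 / c)\<^sup>2 * (cmod h)\<^sup>2 * sob_weight (s + 2 * \<gamma>) m"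
    using assms(2) by (intro mult_left_mono sob_weight_mult_powr_msq_le) auto
  finally show ?thesis
    by (simp add: mult_ac)
qed

lemma sob_norm_le_of_pointwise:
  fixes P f g :: "'n::finite fcoeff"
  assumes f: "in_W t f" and g: "in_W t g" and "0 \<le> K"
    and pointwise: "\<And>m. sob_weight s m * (cmod (P m))\<^sup>2
      \<le> K\<^sup>2 * (sob_weight t m * (cmod (f m))\<^sup>2 + sob_weight t m * (cmod (g m))\<^sup>2)"
  shows "in_W s P" and "sob_norm s P \<le> K * (sob_norm t f + sob_norm t g)"
proof -
  let ?F = "\<lambda>m. sob_weight t m * (cmod (f m))\<^sup>2" and ?G = "\<lambda>m. sob_weight t m * (cmod (g m))\<^sup>2"
  have sum_F: "?F summable_on UNIV" and sum_G: "?G summable_on UNIV"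
    using f g by (simp_all add: in_W_def)
  have sum_bound: "(\<lambda>m. K\<^sup>2 * (?F m + ?G m)) summable_on UNIV"
    by (intro summable_on_cmult_right summable_on_add sum_F sum_G)
  have sum_P: "(\<lambda>m. sob_weight s m * (cmod (P m))\<^sup>2) summable_on UNIV"
    by (rule summable_on_comparison_test[OF sum_bound pointwise]) (simp add: sob_weight_nonneg)
  then show "in_W s P"
    by (simp add: in_W_def)
  have "(\<Sum>\<^sub>\<infinity>m. sob_weight s m * (cmod (P m))\<^sup>2) \<le> (\<Sum>\<^sub>\<infinity>m. K\<^sup>2 * (?F m + ?G m))"
    by (rule infsum_mono[OF sum_P sum_bound pointwise])
  also have "\<dots> = K\<^sup>2 * (infsum ?F UNIV + infsum ?G UNIV)"
    by (simp add: infsum_cmult_right' infsum_add[OF sum_F sum_G])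
  finally have "sob_norm s P \<le> sqrt (K\<^sup>2 * (infsum ?F UNIV + infsum ?G UNIV))"
    unfolding sob_norm_def by (rule real_sqrt_le_mono)
  also have "\<dots> = K * sqrt (infsum ?F UNIV + infsum ?G UNIV)"
    using \<open>0 \<le> K\<close> by (simp add: real_sqrt_mult)
  also have "\<dots> \<le> K * (sob_norm t f + sob_norm t g)"
    unfolding sob_norm_def using \<open>0 \<le> K\<close>
    by (intro mult_left_mono sqrt_add_le_add_sqrt infsum_nonneg) (auto simp: sob_weight_nonneg)
  finally show "sob_norm s P \<le> K * (sob_norm t f + sob_norm t g)" .
qed

definition joint_quotient ::
    "('m \<Rightarrow> complex) \<Rightarrow> ('m \<Rightarrow> complex) \<Rightarrow> ('m \<Rightarrow> complex) \<Rightarrow> ('m \<Rightarrow> complex) \<Rightarrow> 'm \<Rightarrow> complex" where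
  "joint_quotient a b f g m = (if a m \<noteq> 0 then f m / a m else if b m \<noteq> 0 then g m / b m else 0)"

lemma joint_quotient_solves:
  assumes compat: "\<And>m. a m * g m = b m * f m"
    and common_zeros: "\<And>m. a m = 0 \<Longrightarrow> b m = 0 \<Longrightarrow> f m = 0 \<and> g m = 0"
  shows "a m * joint_quotient a b f g m = f m" and "b m * joint_quotient a b f g m = g m"
  using compat[of m] common_zeros[of m] by (auto simp: joint_quotient_def field_simps)

text \<open>The condition 0 < msq m matters: the zero frequency would otherwise satisfy the bound
  vacuously, because 0 powr (- gamma) = 0.\<close>

definition small_divisor_bound :: "real \<Rightarrow> real \<Rightarrow> ('n::finite) fcoeff \<Rightarrow> bool" where
  "small_divisor_bound c \<gamma> a \<longleftrightarrow>
     (\<forall>m. a m \<noteq> 0 \<longrightarrow> 0 < msq m \<and> c * msq m powr (- \<gamma>) < cmod (a m))"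

lemma small_divisor_boundD:
  "small_divisor_bound c \<gamma> a \<Longrightarrow> a m \<noteq> 0 \<Longrightarrow> 0 < msq m \<and> c * msq m powr (- \<gamma>) < cmod (a m)"
  unfolding small_divisor_bound_def by blast

lemma sob_weight_joint_quotient_le:
  assumes a: "small_divisor_bound c \<gamma> a" and b: "small_divisor_bound c \<gamma> b" and "0 < c" "0 \<le> \<gamma>"
  shows "sob_weight s m * (cmod (joint_quotient a b f g m))\<^sup>2
    \<le> (1 / c)\<^sup>2 * (sob_weight (s + 2 * \<gamma>) m * (cmod (f m))\<^sup>2 + sob_weight (s + 2 * \<gamma>) m * (cmod (g m))\<^sup>2)"
    (is "_ \<le> (1 / c)\<^sup>2 * (?F + ?G)")
proof -
  have "0 \<le> ?F" "0 \<le> ?G"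
    by (simp_all add: sob_weight_nonneg)
  consider "a m \<noteq> 0" | "a m = 0" "b m \<noteq> 0" | "a m = 0" "b m = 0"
    by blast
  then show ?thesis
  proof cases
    case 1
    then have "sob_weight s m * (cmod (f m / a m))\<^sup>2 \<le> (1 / c)\<^sup>2 * ?F"
      using small_divisor_boundD[OF a] assms(3,4) by (intro sob_weight_divide_le) auto
    with 1 \<open>0 \<le> ?G\<close> show ?thesis
      by (simp add: joint_quotient_def distrib_left add_increasing2)
  next
    case 2
    then have "sob_weight s m * (cmod (g m / b m))\<^sup>2 \<le> (1 / c)\<^sup>2 * ?G"
      using small_divisor_boundD[OF b] assms(3,4) by (intro sob_weight_divide_le) auto
    with 2 \<open>0 \<le> ?F\<close> show ?thesis
      by (simp add: joint_quotient_def distrib_left add_increasing)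
  next
    case 3
    with \<open>0 \<le> ?F\<close> \<open>0 \<le> ?G\<close> show ?thesis
      by (simp add: joint_quotient_def)
  qed
qed

definition shift_symbol :: "(real^'n::finite) \<times> (real^'n) \<Rightarrow> 'n fcoeff" where
  "shift_symbol k m = exp (2 * pi * \<i> * complex_of_real (pdot m k)) - 1"

lemma Lop_eq_mult_shift_symbol: "Lop k h = (\<lambda>m. shift_symbol k m * h m)"
  by (simp add: Lop_def shift_symbol_def)

lemma shift_symbol_diophantine:
  assumes "0 < c" "0 \<le> \<gamma>" "0 < x" "x \<le> msq m"
    and dio: "\<And>p::int. c * x powr (- \<gamma>) < \<bar>pdot m k - real_of_int p\<bar>"
  shows "c * msq m powr (- \<gamma>) < cmod (shift_symbol k m)"
proof -
  have "c * msq m powr (- \<gamma>) \<le> c * x powr (- \<gamma>)"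
    using assms(1-4) by (intro mult_left_mono powr_mono2') auto
  also have "\<dots> < cmod (shift_symbol k m)"
    unfolding shift_symbol_def by (rule norm_exp_2pi_minus_1_gt[OF dio])
  finally show ?thesis .
qed

lemma small_divisor_bound_shift_symbol:
  fixes k :: "(real^'n::finite) \<times> (real^'n)" and component :: "(int^'n) \<times> (int^'n) \<Rightarrow> int^'n"
  assumes "0 < c" "0 \<le> \<gamma>"
    and component_le_msq: "\<And>m. idot (component m) (component m) \<le> msq m"
    and vanishing: "\<And>m. component m = 0 \<Longrightarrow> pdot m k = 0"
    and dio: "\<And>m (p::int). component m \<noteq> 0 \<Longrightarrow>
        c * \<bar>idot (component m) (component m)\<bar> powr (- \<gamma>) < \<bar>pdot m k - real_of_int p\<bar>"
  shows "small_divisor_bound c \<gamma> (shift_symbol k)"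
    and "shift_symbol k m = 0 \<longleftrightarrow> component m = 0"
proof -
  have bound: "0 < msq m \<and> c * msq m powr (- \<gamma>) < cmod (shift_symbol k m)" if "component m \<noteq> 0" for m
  proof -
    have "0 < idot (component m) (component m)"
      using idot_self_pos[OF that] .
    moreover have "c * idot (component m) (component m) powr (- \<gamma>) < \<bar>pdot m k - real_of_int p\<bar>" for p
      using dio[OF that, of p] idot_self_nonneg[of "component m"] by simp
    ultimately show ?thesis
      using assms(1,2) component_le_msq[of m] by (auto intro: shift_symbol_diophantine)
  qed
  have zero: "shift_symbol k m = 0" if "component m = 0" for m
    using vanishing[OF that] by (simp add: shift_symbol_def)
  show "small_divisor_bound c \<gamma> (shift_symbol k)"
    using bound zero by (auto simp: small_divisor_bound_def)
  show "shift_symbol k m = 0 \<longleftrightarrow> component m = 0"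
  proof
    have "0 \<le> c * msq m powr (- \<gamma>)"
      using \<open>0 < c\<close> by simp
    then show "shift_symbol k m = 0 \<Longrightarrow> component m = 0"
      using bound[of m] by auto
  qed (rule zero)
qed

lemma mdot_zero_left [simp]: "mdot 0 v = 0"
  by (simp add: mdot_def)

lemma mdot_zero_right [simp]: "mdot m 0 = 0"
  by (simp add: mdot_def)

lemma small_divisor_bound_shift_fst:
  fixes v :: "real^'n::finite"
  assumes "0 < c" "0 \<le> \<gamma>"
    and dio: "\<And>(m1::int^'n) (m2::int^'n) (p::int). m1 \<noteq> 0 \<Longrightarrow>
        \<bar>pdot (m1, m2) (v, 0) - real_of_int p\<bar> > c * \<bar>idot m1 m1\<bar> powr (- \<gamma>)"
  shows "small_divisor_bound c \<gamma> (shift_symbol (v, 0))"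
    and "shift_symbol (v, 0) m = 0 \<longleftrightarrow> fst m = 0"
proof -
  have "c * \<bar>idot (fst m) (fst m)\<bar> powr (- \<gamma>) < \<bar>pdot m (v, 0) - real_of_int p\<bar>"
    if "fst m \<noteq> 0" for m and p :: int
    using dio[OF that, of "snd m" p] by simp
  moreover have "pdot m (v, 0) = 0" if "fst m = 0" for m
    using that by (simp add: pdot_def)
  ultimately show "small_divisor_bound c \<gamma> (shift_symbol (v, 0))"
    and "shift_symbol (v, 0) m = 0 \<longleftrightarrow> fst m = 0"
    using small_divisor_bound_shift_symbol[where component = fst, OF assms(1,2) idot_fst_le_msq] by blast+
qed

lemma small_divisor_bound_shift_snd:
  fixes v :: "real^'n::finite"
  assumes "0 < c" "0 \<le> \<gamma>"
    and dio: "\<And>(m1::int^'n) (m2::int^'n) (p::int). m2 \<noteq> 0 \<Longrightarrow>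
        \<bar>pdot (m1, m2) (0, v) - real_of_int p\<bar> > c * \<bar>idot m2 m2\<bar> powr (- \<gamma>)"
  shows "small_divisor_bound c \<gamma> (shift_symbol (0, v))"
    and "shift_symbol (0, v) m = 0 \<longleftrightarrow> snd m = 0"
proof -
  have "c * \<bar>idot (snd m) (snd m)\<bar> powr (- \<gamma>) < \<bar>pdot m (0, v) - real_of_int p\<bar>"
    if "snd m \<noteq> 0" for m and p :: int
    using dio[OF that, of "fst m" p] by simp
  moreover have "pdot m (0, v) = 0" if "snd m = 0" for m
    using that by (simp add: pdot_def)
  ultimately show "small_divisor_bound c \<gamma> (shift_symbol (0, v))"
    and "shift_symbol (0, v) m = 0 \<longleftrightarrow> snd m = 0"
    using small_divisor_bound_shift_symbol[where component = snd, OF assms(1,2) idot_snd_le_msq] by blast+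
qed

lemma sob_norm_joint_quotient_le:
  fixes f g :: "'n::finite fcoeff"
  assumes a: "small_divisor_bound c \<gamma> a" and b: "small_divisor_bound c \<gamma> b" and "0 < c" "0 \<le> \<gamma>"
    and f: "W_inf f" and g: "W_inf g"
  shows "W_inf (joint_quotient a b f g)"
    and "sob_norm s (joint_quotient a b f g) \<le> 1 / c * (sob_norm (s + 2 * \<gamma>) f + sob_norm (s + 2 * \<gamma>) g)"
proof -
  have estimate: "in_W t (joint_quotient a b f g) \<and>
      sob_norm t (joint_quotient a b f g) \<le> 1 / c * (sob_norm (t + 2 * \<gamma>) f + sob_norm (t + 2 * \<gamma>) g)" for t
  proof -
    have "in_W (t + 2 * \<gamma>) f" "in_W (t + 2 * \<gamma>) g"
      using f g by (simp_all add: W_inf_def)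
    from sob_norm_le_of_pointwise[OF this _
        sob_weight_joint_quotient_le[OF a b assms(3,4), where s = t and f = f and g = g]]
    show ?thesis
      using assms(3) by simp
  qed
  then show "W_inf (joint_quotient a b f g)"
    by (simp add: W_inf_def)
  show "sob_norm s (joint_quotient a b f g) \<le> 1 / c * (sob_norm (s + 2 * \<gamma>) f + sob_norm (s + 2 * \<gamma>) g)"
    using estimate by blast
qed

theorem proposition2p1:
  fixes tau eta :: "real^'n" and c \<gamma> :: real
  assumes n2: "CARD('n) \<ge> 2"
    and orth: "(\<Sum>j\<in>UNIV. tau $ j * eta $ j) = 0"
    and c_pos: "c > 0" and gamma_pos: "\<gamma> > 0"
    and dio_tau: "\<And>(m1::int^'n) (m2::int^'n) (p::int). m1 \<noteq> 0 \<Longrightarrow>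
        \<bar>pdot (m1, m2) (tau, 0) - real_of_int p\<bar> > c * \<bar>idot m1 m1\<bar> powr (- \<gamma>)"
    and dio_eta: "\<And>(m1::int^'n) (m2::int^'n) (p::int). m2 \<noteq> 0 \<Longrightarrow>
        \<bar>pdot (m1, m2) (0, eta) - real_of_int p\<bar> > c * \<bar>idot m2 m2\<bar> powr (- \<gamma>)"
  shows "\<exists>C>0. \<forall>f g :: 'n fcoeff. W0_inf f \<longrightarrow> W0_inf g \<longrightarrow>
           Lop (tau, 0) g = Lop (0, eta) f \<longrightarrow>
           (\<exists>P. W_inf P \<and> Lop (tau, 0) P = f \<and> Lop (0, eta) P = g \<and>
              (\<forall>s\<ge>0. sob_norm s P \<le> C * (sob_norm (s + 2 * \<gamma>) f + sob_norm (s + 2 * \<gamma>) g)))"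
proof (intro exI[of _ "1 / c"] conjI allI impI)
  let ?a = "shift_symbol (tau, 0)" and ?b = "shift_symbol (0, eta)"
  note a = small_divisor_bound_shift_fst[OF c_pos less_imp_le[OF gamma_pos] dio_tau]
  note b = small_divisor_bound_shift_snd[OF c_pos less_imp_le[OF gamma_pos] dio_eta]
  show "0 < 1 / c"
    using c_pos by simp
  fix f g :: "'n fcoeff"
  assume f: "W0_inf f" and g: "W0_inf g" and compat: "Lop (tau, 0) g = Lop (0, eta) f"
  have "?a m * g m = ?b m * f m" for m
    using fun_cong[OF compat, of m] by (simp add: Lop_eq_mult_shift_symbol)
  moreover have "f m = 0 \<and> g m = 0" if "?a m = 0" "?b m = 0" for m
    using that a(2) b(2) f g by (cases m) (simp add: W0_inf_def)
  ultimately have "Lop (tau, 0) (joint_quotient ?a ?b f g) = f" "Lop (0, eta) (joint_quotient ?a ?b f g) = g"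
    using joint_quotient_solves[of ?a g ?b f] by (simp_all add: Lop_eq_mult_shift_symbol)
  moreover have "W_inf (joint_quotient ?a ?b f g)"
    and "sob_norm s (joint_quotient ?a ?b f g) \<le> 1 / c * (sob_norm (s + 2 * \<gamma>) f + sob_norm (s + 2 * \<gamma>) g)" for s
    using sob_norm_joint_quotient_le[OF a(1) b(1) c_pos less_imp_le[OF gamma_pos]] f g
    unfolding W0_inf_def by blast+
  ultimately show "\<exists>P. W_inf P \<and> Lop (tau, 0) P = f \<and> Lop (0, eta) P = g \<and>
      (\<forall>s\<ge>0. sob_norm s P \<le> 1 / c * (sob_norm (s + 2 * \<gamma>) f + sob_norm (s + 2 * \<gamma>) g))"
    by blast
qed

end
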